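(* Let $m\ge 2$, $\alpha\in[0,1]$, $\pi$ a permutation of $E_{m-1}=\{1,\dots,m-1\}$ and $V_\alpha$ as defined below. Then $V_\alpha$ is ergodic: for every $\mathbf{x}\in S^{m-1}$ the limit $\lim_{n\to\infty}\frac1n\sum_{k=0}^{n-1}V_\alpha^k(\mathbf{x})$ exists.
   Context: $S^{m-1}=\{\mathbf{x}=(x_1,\dots,x_m)\in\mathbb{R}^m: x_i\ge 0,\ \sum_{i=1}^m x_i=1\}$. For $\alpha\in[0,1]$ the operator $V_\alpha\colon S^{m-1}\to S^{m-1}$ is $\mathbf{x}\mapsto\mathbf{x}'$ with $x'_k=2x_m(\alpha x_k+(1-\alpha)x_{\pi(k)})$ for $k=1,\dots,m-1$ and $x'_m=x_m^2+\big(\sum_{i=1}^{m-1}x_i\big)^2$; $V_\alpha^k$ is its $k$-fold iterate ($V_\alpha^0=\mathrm{Id}$). *)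

theory Defs
  imports "HOL-Analysis.Analysis" "HOL-Combinatorics.Permutations"
begin

text \<open>Points of R^m are represented as functions nat => real, using coordinates 1..m.\<close>

definition std_simplex_S :: "nat \<Rightarrow> (nat \<Rightarrow> real) set" where
  "std_simplex_S m = {x. (\<forall>i\<in>{1..m}. x i \<ge> 0) \<and> (\<Sum>i=1..m. x i) = 1}"

definition V :: "nat \<Rightarrow> real \<Rightarrow> (nat \<Rightarrow> nat) \<Rightarrow> (nat \<Rightarrow> real) \<Rightarrow> (nat \<Rightarrow> real)" where
  "V m \<alpha> \<pi> x = (\<lambda>k.
     if 1 \<le> k \<and> k \<le> m - 1 then 2 * x m * (\<alpha> * x k + (1 - \<alpha>) * x (\<pi> k))
     else if k = m then (x m)\<^sup>2 + (\<Sum>i=1..m-1. x i)\<^sup>2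
     else 0)"

end

theory Submission
  imports Defs "HOL-Combinatorics.Cycles"
begin

(* Write t = x_m and s = x_1 + ... + x_(m-1). One step of V maps (s, t) to (2 s t, s^2 + t^2),
   so s + t = 1 is preserved and u = t - 1/2 satisfies u' = 2 u^2; hence t converges
   (monotonically from the first step on).
   On the first m - 1 coordinates V is 2 t times the averaging operator
   A z = alpha z + (1 - alpha) (z o pi), so there V^n x = c_n A^n x with c_n = prod_(j<n) 2 t_j.
   Since A preserves the sum of these coordinates, c_n = s_n / s_0 = (1 - t_n) / s_0 converges.
   As pi has finite order, for alpha < 1 every z splits into a pi-invariant part and a coboundary
   w - A w, so the Cesaro means of A^n z converge. Finally, the Cesaro means of c_n a_n converge
   whenever c_n converges and a_n is bounded with convergent Cesaro means. *)

definition cesaro_mean :: "(nat \<Rightarrow> 'a::real_normed_vector) \<Rightarrow> nat \<Rightarrow> 'a" where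
  "cesaro_mean f n = (1 / real n) *\<^sub>R (\<Sum>k<n. f k)"

lemma cesaro_mean_real: "cesaro_mean f = (\<lambda>n. (1 / real n) * (\<Sum>k<n. f k))"
  for f :: "nat \<Rightarrow> real"
  by (simp add: cesaro_mean_def fun_eq_iff)

lemma cesaro_mean_add: "cesaro_mean (\<lambda>k. f k + g k) n = cesaro_mean f n + cesaro_mean g n"
  by (simp add: cesaro_mean_def sum.distrib scaleR_add_right)

lemma cesaro_mean_scaleR: "cesaro_mean (\<lambda>k. c *\<^sub>R f k) n = c *\<^sub>R cesaro_mean f n"
  by (simp add: cesaro_mean_def scaleR_sum_right)

lemma cesaro_mean_const: "n > 0 \<Longrightarrow> cesaro_mean (\<lambda>k. c) n = c"
  by (simp add: cesaro_mean_def sum_constant_scaleR)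

lemma cesaro_mean_tendsto_zero:
  assumes "f \<longlonglongrightarrow> 0"
  shows "cesaro_mean f \<longlonglongrightarrow> 0"
proof (rule tendstoI)
  fix \<epsilon> :: real assume "\<epsilon> > 0"
  then obtain M where M: "\<And>k. k \<ge> M \<Longrightarrow> norm (f k) < \<epsilon> / 2"
    using LIMSEQ_D[OF assms, of "\<epsilon> / 2"] by auto
  define C where "C = (\<Sum>k<M. norm (f k))"
  have "\<forall>\<^sub>F n in sequentially. C / real n < \<epsilon> / 2"
    using \<open>\<epsilon> > 0\<close> by (intro order_tendstoD(2)[OF lim_const_over_n]) simp
  moreover have "\<forall>\<^sub>F n in sequentially. n \<ge> M" and "\<forall>\<^sub>F n in sequentially. n > 0"
    by (simp_all add: eventually_ge_at_top eventually_gt_at_top)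
  ultimately show "\<forall>\<^sub>F n in sequentially. dist (cesaro_mean f n) 0 < \<epsilon>"
  proof eventually_elim
    case (elim n)
    have split: "{..<n} = {..<M} \<union> {M..<n}"
      using elim by auto
    have "norm (\<Sum>k<n. f k) \<le> (\<Sum>k<n. norm (f k))"
      by (rule norm_sum)
    also have "\<dots> = C + (\<Sum>k\<in>{M..<n}. norm (f k))"
      unfolding C_def split by (rule sum.union_disjoint) auto
    also have "(\<Sum>k\<in>{M..<n}. norm (f k)) \<le> (\<Sum>k\<in>{M..<n}. \<epsilon> / 2)"
      using M by (intro sum_mono less_imp_le) auto
    also have "\<dots> \<le> real n * (\<epsilon> / 2)"
      using \<open>\<epsilon> > 0\<close> by simp
    finally have "norm (\<Sum>k<n. f k) / real n \<le> C / real n + \<epsilon> / 2"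
      using elim by (simp add: field_simps)
    moreover have "norm (cesaro_mean f n) = norm (\<Sum>k<n. f k) / real n"
      by (simp add: cesaro_mean_def)
    ultimately show ?case
      using elim(1) by (simp only: dist_norm diff_zero)
  qed
qed

lemma cesaro_mean_tendsto:
  assumes "f \<longlonglongrightarrow> L"
  shows "cesaro_mean f \<longlonglongrightarrow> L"
proof -
  have "(\<lambda>n. cesaro_mean (\<lambda>k. f k - L) n + L) \<longlonglongrightarrow> 0 + L"
    using assms by (intro tendsto_add cesaro_mean_tendsto_zero tendsto_const) (simp add: LIM_zero)
  moreover have "\<forall>\<^sub>F n in sequentially. cesaro_mean (\<lambda>k. f k - L) n + L = cesaro_mean f n"
    using eventually_gt_at_top[of 0]
  proof eventually_elim
    case (elim n)
    then show ?case
      using cesaro_mean_add[of "\<lambda>k. f k - L" "\<lambda>k. L" n] cesaro_mean_const[of n L] by simp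
  qed
  ultimately show ?thesis
    by (simp add: tendsto_cong)
qed

lemma cesaro_mean_telescope:
  assumes "Bseq b"
  shows "cesaro_mean (\<lambda>k. b k - b (Suc k)) \<longlonglongrightarrow> 0"
proof -
  have "Zfun (\<lambda>n. 1 / real n) sequentially"
    using lim_const_over_n[of "1::real"] by (simp add: tendsto_Zfun_iff)
  moreover have "Bseq (\<lambda>n. b 0 - b n)"
    using assms Bseq_add[of "\<lambda>n. - b n" "b 0"] by (simp add: Bseq_minus_iff)
  ultimately have "Zfun (\<lambda>n. (1 / real n) *\<^sub>R (b 0 - b n)) sequentially"
    by (rule bounded_bilinear.Zfun_prod_Bfun[OF bounded_bilinear_scaleR])
  then show ?thesis
    by (simp add: tendsto_Zfun_iff cesaro_mean_def sum_lessThan_telescope')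
qed

lemma cesaro_mean_scaleR_tendsto:
  assumes c: "c \<longlonglongrightarrow> c0" and a: "Bseq a" and mean: "cesaro_mean a \<longlonglongrightarrow> L"
  shows "cesaro_mean (\<lambda>k. c k *\<^sub>R a k) \<longlonglongrightarrow> c0 *\<^sub>R L"
proof -
  have "Zfun (\<lambda>k. c k - c0) sequentially"
    using c by (simp add: tendsto_Zfun_iff)
  then have "Zfun (\<lambda>k. (c k - c0) *\<^sub>R a k) sequentially"
    using a by (rule bounded_bilinear.Zfun_prod_Bfun[OF bounded_bilinear_scaleR])
  then have "(\<lambda>n. c0 *\<^sub>R cesaro_mean a n + cesaro_mean (\<lambda>k. (c k - c0) *\<^sub>R a k) n) \<longlonglongrightarrow> c0 *\<^sub>R L + 0"
    by (intro tendsto_intros mean cesaro_mean_tendsto_zero) (simp add: tendsto_Zfun_iff)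
  then show ?thesis
    by (simp flip: cesaro_mean_scaleR cesaro_mean_add add: scaleR_diff_left)
qed

lemma convergent_twice_square_iteration:
  fixes u :: "nat \<Rightarrow> real"
  assumes step: "\<And>n. u (Suc n) = 2 * (u n)\<^sup>2" and start: "\<bar>u 0\<bar> \<le> 1/2"
  shows "convergent u"
proof -
  have bound: "\<bar>u n\<bar> \<le> 1/2" for n
  proof (induction n)
    case (Suc n)
    then have "(u n)\<^sup>2 \<le> 1/4"
      using power_mono[OF Suc.IH abs_ge_zero, of 2] by (simp add: power_divide)
    then show ?case
      by (simp add: step)
  qed (rule start)
  have "u (Suc (Suc n)) \<le> u (Suc n)" for n
  proof -
    have "0 \<le> u (Suc n)" and "2 * u (Suc n) \<le> 1"
      using bound[of "Suc n"] by (simp_all add: step)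
    then have "u (Suc n) * (2 * u (Suc n)) \<le> u (Suc n)"
      by (simp add: mult_left_le)
    then show ?thesis
      by (simp add: step[of "Suc n"] power2_eq_square)
  qed
  then have "decseq (\<lambda>n. u (Suc n))" and "\<forall>n. 0 \<le> u (Suc n)"
    by (simp_all add: decseq_Suc_iff step)
  then obtain L where "(\<lambda>n. u (Suc n)) \<longlonglongrightarrow> L"
    by (rule decseq_convergent)
  then have "convergent (\<lambda>n. u (Suc n))"
    by (auto simp: convergent_def)
  then show ?thesis
    by (simp only: convergent_Suc_iff)
qed

definition perm_avg :: "real \<Rightarrow> ('i \<Rightarrow> 'i) \<Rightarrow> ('i \<Rightarrow> real) \<Rightarrow> 'i \<Rightarrow> real" where
  "perm_avg \<alpha> \<pi> z i = \<alpha> * z i + (1 - \<alpha>) * z (\<pi> i)"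

lemma perm_avg_pow_Suc:
  "(perm_avg \<alpha> \<pi> ^^ Suc n) z i = \<alpha> * (perm_avg \<alpha> \<pi> ^^ n) z i + (1 - \<alpha>) * (perm_avg \<alpha> \<pi> ^^ n) z (\<pi> i)"
  by (simp add: perm_avg_def)

lemma perm_avg_pow_add:
  "(perm_avg \<alpha> \<pi> ^^ n) (\<lambda>j. f j + g j) i = (perm_avg \<alpha> \<pi> ^^ n) f i + (perm_avg \<alpha> \<pi> ^^ n) g i"
  by (induction n arbitrary: i) (simp_all only: perm_avg_pow_Suc funpow_0, simp_all add: algebra_simps)

lemma perm_avg_pow_diff:
  "(perm_avg \<alpha> \<pi> ^^ n) (\<lambda>j. f j - g j) i = (perm_avg \<alpha> \<pi> ^^ n) f i - (perm_avg \<alpha> \<pi> ^^ n) g i"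
  by (induction n arbitrary: i) (simp_all only: perm_avg_pow_Suc funpow_0, simp_all add: algebra_simps)

lemma perm_avg_pow_invariant:
  assumes "\<And>i. Q (\<pi> i) = Q i"
  shows "(perm_avg \<alpha> \<pi> ^^ n) Q = Q"
  by (induction n) (simp_all add: perm_avg_def assms algebra_simps)

lemma perm_avg_pow_bounded:
  assumes "\<pi> permutes A" and "0 \<le> \<alpha>" and "\<alpha> \<le> 1"
    and bound: "\<And>j. j \<in> A \<Longrightarrow> \<bar>z j\<bar> \<le> B" and "i \<in> A"
  shows "\<bar>(perm_avg \<alpha> \<pi> ^^ n) z i\<bar> \<le> B"
  using \<open>i \<in> A\<close>
proof (induction n arbitrary: i)
  case 0
  then show ?case by (simp add: bound)
next
  case (Suc n)
  let ?y = "(perm_avg \<alpha> \<pi> ^^ n) z"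
  have "\<pi> i \<in> A"
    using Suc.prems \<open>\<pi> permutes A\<close> by (simp add: permutes_in_image)
  have "\<bar>(perm_avg \<alpha> \<pi> ^^ Suc n) z i\<bar> \<le> \<alpha> * \<bar>?y i\<bar> + (1 - \<alpha>) * \<bar>?y (\<pi> i)\<bar>"
    unfolding perm_avg_pow_Suc using abs_triangle_ineq[of "\<alpha> * ?y i" "(1 - \<alpha>) * ?y (\<pi> i)"]
    using \<open>0 \<le> \<alpha>\<close> \<open>\<alpha> \<le> 1\<close> by (simp add: abs_mult)
  also have "\<dots> \<le> \<alpha> * B + (1 - \<alpha>) * B"
    using Suc \<open>\<pi> i \<in> A\<close> \<open>0 \<le> \<alpha>\<close> \<open>\<alpha> \<le> 1\<close> by (intro add_mono mult_left_mono) auto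
  finally show ?case
    by (simp add: algebra_simps)
qed

lemma perm_avg_sum:
  assumes "\<pi> permutes A"
  shows "(\<Sum>i\<in>A. perm_avg \<alpha> \<pi> z i) = (\<Sum>i\<in>A. z i)"
proof -
  have "(\<Sum>i\<in>A. z (\<pi> i)) = (\<Sum>i\<in>A. z i)"
    by (rule sum.reindex_bij_betw[OF permutes_imp_bij[OF assms]])
  then show ?thesis
    by (simp add: perm_avg_def sum.distrib flip: sum_distrib_left) (simp add: algebra_simps)
qed

lemma perm_avg_pow_sum:
  assumes "\<pi> permutes A"
  shows "(\<Sum>i\<in>A. (perm_avg \<alpha> \<pi> ^^ n) z i) = (\<Sum>i\<in>A. z i)"
  by (induction n) (simp_all add: perm_avg_sum[OF assms])

text \<open>Averaging the partial orbit sums of z over a period N of \<pi> gives v with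
  v - v \<circ> \<pi> = z - Q, where Q is the orbit average of z.\<close>
lemma perm_avg_coboundary_decomposition:
  assumes period: "\<pi> ^^ N = id" "N > 0" and "\<alpha> \<noteq> 1"
  obtains Q w where "\<And>i. Q (\<pi> i) = Q i" and "\<And>i. z i = Q i + (w i - perm_avg \<alpha> \<pi> w i)"
proof -
  define Q where "Q i = (\<Sum>j<N. z ((\<pi> ^^ j) i)) / real N" for i
  define v where "v i = (\<Sum>j<N. \<Sum>l<j. z ((\<pi> ^^ l) i)) / real N" for i
  have Q_inv: "Q (\<pi> i) = Q i" for i
  proof -
    have "(\<Sum>j<N. z (\<pi> ((\<pi> ^^ j) i))) = (\<Sum>j<N. z ((\<pi> ^^ j) i))"
      using sum_lessThan_telescope[of "\<lambda>j. z ((\<pi> ^^ j) i)" N] period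
      by (simp add: sum_subtractf)
    then show ?thesis
      by (simp add: Q_def funpow_swap1[symmetric])
  qed
  have v_diff: "v i - v (\<pi> i) = z i - Q i" for i
  proof -
    have "v i - v (\<pi> i) = (\<Sum>j<N. \<Sum>l<j. z ((\<pi> ^^ l) i) - z (\<pi> ((\<pi> ^^ l) i))) / real N"
      by (simp add: v_def funpow_swap1[symmetric] sum_subtractf diff_divide_distrib)
    also have "\<dots> = (\<Sum>j<N. z i - z ((\<pi> ^^ j) i)) / real N"
      using sum_lessThan_telescope'[of "\<lambda>l. z ((\<pi> ^^ l) i)"] by simp
    also have "\<dots> = z i - Q i"
      using period by (simp add: Q_def sum_subtractf field_simps)
    finally show ?thesis .
  qed
  define w where "w i = v i / (1 - \<alpha>)" for i
  have "w i - perm_avg \<alpha> \<pi> w i = v i - v (\<pi> i)" for i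
  proof -
    have "w i - perm_avg \<alpha> \<pi> w i = (1 - \<alpha>) * (w i - w (\<pi> i))"
      by (simp add: perm_avg_def algebra_simps)
    also have "\<dots> = v i - v (\<pi> i)"
      using \<open>\<alpha> \<noteq> 1\<close> by (simp add: w_def flip: diff_divide_distrib)
    finally show ?thesis .
  qed
  with Q_inv v_diff show thesis
    by (intro that[of Q w]) simp_all
qed

lemma perm_avg_pow_cesaro_convergent:
  assumes "\<pi> permutes A" and "finite A" and "0 \<le> \<alpha>" and "\<alpha> \<le> 1" and "i \<in> A"
  shows "convergent (cesaro_mean (\<lambda>k. (perm_avg \<alpha> \<pi> ^^ k) z i))"
proof (cases "\<alpha> = 1")
  case True
  then have "perm_avg \<alpha> \<pi> = id"
    by (simp add: perm_avg_def fun_eq_iff)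
  then show ?thesis
    using cesaro_mean_tendsto[OF tendsto_const] by (auto simp: convergent_def)
next
  case False
  obtain N where "\<pi> ^^ N = id" and "N > 0"
    using permutation_is_nilpotent[OF permutes_imp_permutation[OF \<open>finite A\<close> \<open>\<pi> permutes A\<close>]] .
  then obtain Q w where Q: "\<And>i. Q (\<pi> i) = Q i" and z: "\<And>i. z i = Q i + (w i - perm_avg \<alpha> \<pi> w i)"
    using perm_avg_coboundary_decomposition False by metis
  define b where "b k = (perm_avg \<alpha> \<pi> ^^ k) w i" for k
  have "z = (\<lambda>j. Q j + (w j - perm_avg \<alpha> \<pi> w j))"
    using z by blast
  then have orbit: "(perm_avg \<alpha> \<pi> ^^ k) z i = Q i + (b k - b (Suc k))" for k
    by (simp add: b_def perm_avg_pow_add perm_avg_pow_diff perm_avg_pow_invariant[of Q \<pi>, OF Q]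
        funpow_Suc_right del: funpow.simps)
  have "\<bar>b k\<bar> \<le> (\<Sum>j\<in>A. \<bar>w j\<bar>)" for k
    unfolding b_def using assms by (intro perm_avg_pow_bounded member_le_sum) auto
  then have "Bseq b"
    by (intro BseqI') simp
  then have "(\<lambda>n. cesaro_mean (\<lambda>k. Q i) n + cesaro_mean (\<lambda>k. b k - b (Suc k)) n) \<longlonglongrightarrow> Q i + 0"
    by (intro tendsto_add cesaro_mean_tendsto tendsto_const cesaro_mean_telescope)
  then show ?thesis
    by (auto simp: convergent_def orbit cesaro_mean_add[symmetric])
qed

lemma std_simplex_S_head_plus_last:
  assumes "x \<in> std_simplex_S m" and "m \<ge> 1"
  shows "(\<Sum>i=1..m-1. x i) + x m = 1"
proof -
  have "{1..m} = insert m {1..m-1}"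
    using \<open>m \<ge> 1\<close> by auto
  then show ?thesis
    using assms by (simp add: std_simplex_S_def add.commute)
qed

lemma V_head: "i \<in> {1..m-1} \<Longrightarrow> V m \<alpha> \<pi> z i = 2 * z m * perm_avg \<alpha> \<pi> z i"
  by (simp add: V_def perm_avg_def)

lemma V_last: "V m \<alpha> \<pi> z m = (z m)\<^sup>2 + (\<Sum>i=1..m-1. z i)\<^sup>2"
proof -
  have "\<not> (1 \<le> m \<and> m \<le> m - 1)"
    by arith
  then show ?thesis
    unfolding V_def by (simp only: if_False if_True simp_thms)
qed

lemma V_head_sum:
  assumes "\<pi> permutes {1..m-1}"
  shows "(\<Sum>i=1..m-1. V m \<alpha> \<pi> z i) = 2 * z m * (\<Sum>i=1..m-1. z i)"
  using perm_avg_sum[OF assms] by (simp add: V_head flip: sum_distrib_left)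

lemma V_pow_head_plus_last:
  assumes "m \<ge> 1" and "\<pi> permutes {1..m-1}" and "x \<in> std_simplex_S m"
  shows "(\<Sum>i=1..m-1. (V m \<alpha> \<pi> ^^ n) x i) + (V m \<alpha> \<pi> ^^ n) x m = 1"
proof (induction n)
  case 0
  then show ?case
    using std_simplex_S_head_plus_last[OF assms(3)] assms(1) by simp
next
  case (Suc n)
  have "(\<Sum>i=1..m-1. (V m \<alpha> \<pi> ^^ Suc n) x i) + (V m \<alpha> \<pi> ^^ Suc n) x m
      = ((\<Sum>i=1..m-1. (V m \<alpha> \<pi> ^^ n) x i) + (V m \<alpha> \<pi> ^^ n) x m)\<^sup>2"
    using V_head_sum[OF assms(2)] by (simp add: V_last power2_eq_square algebra_simps)
  with Suc.IH show ?case
    by simp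
qed

lemma V_pow_head:
  assumes "\<pi> permutes {1..m-1}" and "i \<in> {1..m-1}"
  shows "(V m \<alpha> \<pi> ^^ n) z i = (\<Prod>j<n. 2 * (V m \<alpha> \<pi> ^^ j) z m) * (perm_avg \<alpha> \<pi> ^^ n) z i"
  using assms(2)
proof (induction n arbitrary: i)
  case 0
  then show ?case by simp
next
  case (Suc n)
  moreover have "\<pi> i \<in> {1..m-1}"
    using Suc.prems assms(1) by (simp only: permutes_in_image)
  ultimately show ?case
    by (simp add: V_head perm_avg_def algebra_simps)
qed

lemma V_pow_last_convergent:
  assumes "m \<ge> 1" and "\<pi> permutes {1..m-1}" and "x \<in> std_simplex_S m"
  shows "convergent (\<lambda>n. (V m \<alpha> \<pi> ^^ n) x m)"
proof -
  define u where "u n = (V m \<alpha> \<pi> ^^ n) x m - 1/2" for n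
  have "u (Suc n) = 2 * (u n)\<^sup>2" for n
  proof -
    have sq: "t\<^sup>2 + (1 - t)\<^sup>2 - 1/2 = 2 * (t - 1/2)\<^sup>2" for t :: real
      by (simp add: power2_eq_square algebra_simps)
    have "(\<Sum>i=1..m-1. (V m \<alpha> \<pi> ^^ n) x i) = 1 - (V m \<alpha> \<pi> ^^ n) x m"
      using V_pow_head_plus_last[OF assms] by (simp add: eq_diff_eq)
    then show ?thesis
      by (simp only: u_def funpow.simps o_apply V_last sq)
  qed
  moreover have "\<bar>u 0\<bar> \<le> 1/2"
  proof -
    have "0 \<le> x m" and "0 \<le> (\<Sum>i=1..m-1. x i)"
      using assms(1,3) by (auto simp: std_simplex_S_def intro!: sum_nonneg)
    then show ?thesis
      using std_simplex_S_head_plus_last[OF assms(3)] assms(1) by (simp add: u_def abs_if)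
  qed
  ultimately have "convergent u"
    by (rule convergent_twice_square_iteration)
  then show ?thesis
    using convergent_add_const_iff[of "1/2" u] by (simp add: u_def)
qed

lemma V_pow_growth_factor:
  assumes "m \<ge> 1" and "\<pi> permutes {1..m-1}" and "x \<in> std_simplex_S m"
  shows "(\<Prod>j<k. 2 * (V m \<alpha> \<pi> ^^ j) x m) * (\<Sum>i=1..m-1. x i) = 1 - (V m \<alpha> \<pi> ^^ k) x m"
proof -
  have "(\<Sum>i=1..m-1. (V m \<alpha> \<pi> ^^ k) x i)
      = (\<Sum>i=1..m-1. (\<Prod>j<k. 2 * (V m \<alpha> \<pi> ^^ j) x m) * (perm_avg \<alpha> \<pi> ^^ k) x i)"
    by (intro sum.cong refl V_pow_head[OF assms(2)])
  also have "\<dots> = (\<Prod>j<k. 2 * (V m \<alpha> \<pi> ^^ j) x m) * (\<Sum>i=1..m-1. x i)"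
    by (simp only: perm_avg_pow_sum[OF assms(2)] flip: sum_distrib_left)
  finally show ?thesis
    using V_pow_head_plus_last[OF assms, where \<alpha> = \<alpha> and n = k] by simp
qed

lemma V_pow_head_cesaro_convergent:
  assumes "m \<ge> 1" and "0 \<le> \<alpha>" and "\<alpha> \<le> 1" and perm: "\<pi> permutes {1..m-1}"
    and x: "x \<in> std_simplex_S m" and i: "i \<in> {1..m-1}"
  shows "convergent (cesaro_mean (\<lambda>k. (V m \<alpha> \<pi> ^^ k) x i))"
proof -
  define c where "c k = (\<Prod>j<k. 2 * (V m \<alpha> \<pi> ^^ j) x m)" for k
  define a where "a k = (perm_avg \<alpha> \<pi> ^^ k) x i" for k
  define s0 where "s0 = (\<Sum>j=1..m-1. x j)"
  have orbit: "(V m \<alpha> \<pi> ^^ k) x i = c k * a k" for k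
    unfolding c_def a_def by (rule V_pow_head[OF perm i])
  have "0 \<le> x j" if "j \<in> {1..m-1}" for j
    using x that by (auto simp: std_simplex_S_def)
  then have a_bound: "\<bar>a k\<bar> \<le> s0" for k
    unfolding a_def s0_def using assms(2,3) perm i
    by (intro perm_avg_pow_bounded) (auto intro!: member_le_sum)
  show ?thesis
  proof (cases "s0 = 0")
    case True
    then have "(\<lambda>k. (V m \<alpha> \<pi> ^^ k) x i) = (\<lambda>k. 0)"
      using a_bound by (simp add: orbit fun_eq_iff)
    then show ?thesis
      using cesaro_mean_tendsto[OF tendsto_const] by (auto simp: convergent_def)
  next
    case False
    have c_eq: "c k = (1 - (V m \<alpha> \<pi> ^^ k) x m) / s0" for k
      using V_pow_growth_factor[OF assms(1) perm x, where \<alpha> = \<alpha> and k = k] False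
      by (simp add: c_def s0_def eq_divide_eq)
    obtain T where "(\<lambda>k. (V m \<alpha> \<pi> ^^ k) x m) \<longlonglongrightarrow> T"
      using V_pow_last_convergent[OF assms(1) perm x, where \<alpha> = \<alpha>] by (auto simp: convergent_def)
    then have "(\<lambda>k. c k) \<longlonglongrightarrow> (1 - T) / s0"
      unfolding c_eq using False by (intro tendsto_intros)
    moreover have "Bseq a"
      using a_bound by (intro BseqI') auto
    moreover obtain L where "cesaro_mean a \<longlonglongrightarrow> L"
      using perm_avg_pow_cesaro_convergent[OF perm _ assms(2,3) i, where z = x]
      unfolding convergent_def a_def[abs_def] by auto
    ultimately have "cesaro_mean (\<lambda>k. c k *\<^sub>R a k) \<longlonglongrightarrow> ((1 - T) / s0) *\<^sub>R L"
      by (rule cesaro_mean_scaleR_tendsto)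
    then show ?thesis
      by (auto simp: convergent_def orbit)
  qed
qed

theorem corollary2:
  fixes m :: nat and \<alpha> :: real and \<pi> :: "nat \<Rightarrow> nat"
  assumes "m \<ge> 2" and "0 \<le> \<alpha>" and "\<alpha> \<le> 1"
    and "\<pi> permutes {1..m-1}"
  shows "\<forall>x\<in>std_simplex_S m. \<exists>L :: nat \<Rightarrow> real. \<forall>i\<in>{1..m}.
           (\<lambda>n. (1 / real n) * (\<Sum>k<n. ((V m \<alpha> \<pi> ^^ k) x) i)) \<longlonglongrightarrow> L i"
proof
  fix x assume x: "x \<in> std_simplex_S m"
  have "m \<ge> 1"
    using assms(1) by simp
  have "convergent (cesaro_mean (\<lambda>k. (V m \<alpha> \<pi> ^^ k) x i))" if "i \<in> {1..m}" for i
  proof (cases "i = m")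
    case True
    then show ?thesis
      using V_pow_last_convergent[OF \<open>m \<ge> 1\<close> assms(4) x, where \<alpha> = \<alpha>] cesaro_mean_tendsto
      by (auto simp: convergent_def)
  next
    case False
    with that have "i \<in> {1..m-1}"
      by auto
    then show ?thesis
      by (rule V_pow_head_cesaro_convergent[OF \<open>m \<ge> 1\<close> assms(2-4) x])
  qed
  then show "\<exists>L. \<forall>i\<in>{1..m}. (\<lambda>n. (1 / real n) * (\<Sum>k<n. ((V m \<alpha> \<pi> ^^ k) x) i)) \<longlonglongrightarrow> L i"
    unfolding cesaro_mean_real[symmetric] convergent_LIMSEQ_iff
    by (intro exI[of _ "\<lambda>i. lim (cesaro_mean (\<lambda>k. (V m \<alpha> \<pi> ^^ k) x i))"]) blast
qed

end
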